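(* Let $\kappa\ge3$ and $0<h\le\frac1{10000\pi^2\kappa}$, let $f_{\mathrm{hard}}$ and $\Omega_{\mathrm{hard}}$ be as defined below, and let $\pi^*$ be the probability measure with density proportional to $e^{-f_{\mathrm{hard}}}$. Then $\pi^*(\Omega_{\mathrm{hard}})\ge e^{-d}$, and $\|\nabla f_{\mathrm{hard}}(x)\|_2\le10\sqrt{\kappa d}$ for all $x\in\Omega_{\mathrm{hard}}$.
   Context: $f_{\mathrm{hard}}(x)=\sum_{i=1}^d f_i(x_i)$ with $f_1(c)=\frac12c^2$ and $f_i(c)=\frac\kappa3c^2-\frac{\kappa h}3\cos\frac c{\sqrt h}$ for $2\le i\le d$ (so $I\preceq\nabla^2 f_{\mathrm{hard}}\preceq\kappa I$). Let $K_h=\lfloor\frac{5}{\pi\sqrt{h\kappa}}\rfloor$ and $\Omega_{\mathrm{hard}}$ be the set of $x\in\mathbb{R}^d$ with $|x_1|\le2$ such that for every $2\le i\le d$ there is an integer $k_i$ with $|k_i|\le K_h$ and $-\frac9{20}\pi\sqrt h+2\pi k_i\sqrt h\le x_i\le\frac9{20}\pi\sqrt h+2\pi k_i\sqrt h$. *)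

theory Defs
  imports "HOL-Analysis.Analysis"
begin

text \<open>Points of R^d are vectors of type real^'n (d = CARD('n)); the distinguished
  "first" coordinate is an arbitrary fixed index i1.\<close>

definition f_hard :: "real \<Rightarrow> real \<Rightarrow> 'n::finite \<Rightarrow> real^'n \<Rightarrow> real" where
  "f_hard \<kappa> h i1 x = (\<Sum>i\<in>UNIV. if i = i1 then (x$i)^2 / 2
      else \<kappa>/3 * (x$i)^2 - \<kappa>*h/3 * cos (x$i / sqrt h))"

definition K_h :: "real \<Rightarrow> real \<Rightarrow> int" where
  "K_h \<kappa> h = \<lfloor>5 / (pi * sqrt (h * \<kappa>))\<rfloor>"

definition Omega_hard :: "real \<Rightarrow> real \<Rightarrow> 'n::finite \<Rightarrow> (real^'n) set" where
  "Omega_hard \<kappa> h i1 = {x. \<bar>x$i1\<bar> \<le> 2 \<and>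
     (\<forall>i. i \<noteq> i1 \<longrightarrow> (\<exists>k::int. \<bar>k\<bar> \<le> K_h \<kappa> h \<and>
        - (9/20) * pi * sqrt h + 2 * pi * k * sqrt h \<le> x$i \<and>
        x$i \<le> (9/20) * pi * sqrt h + 2 * pi * k * sqrt h))}"

definition pi_star :: "real \<Rightarrow> real \<Rightarrow> 'n::finite \<Rightarrow> (real^'n) measure" where
  "pi_star \<kappa> h i1 = density lborel (\<lambda>x. ennreal (exp (- f_hard \<kappa> h i1 x) /
      (\<integral>y. exp (- f_hard \<kappa> h i1 y) \<partial>lborel)))"

end

theory Submission
  imports Defs "HOL-Probability.Distributions"
begin

text \<open>Both f_hard and Omega_hard split over the coordinates, so the normalised density of
  pi_star is a product and pi_star(Omega_hard) is the product of the one-dimensional ratios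
  (mass of exp(-f_i) on the allowed set) / (total mass of exp(-f_i)); it suffices that each ratio
  is at least 1/e. For the others,
  f_i(c) = kappa/3 c^2 - (kappa h/3) cos(c / sqrt h) changes by less than 1/10 across a period
  cell of length 2 pi sqrt h centred at a minimum 2 pi k sqrt h with |k| <= K_h, so each such cell
  carries at most 5/2 times the mass of its central interval of half-width 9/20 pi sqrt h. These
  cells cover an interval (-T, T) with sqrt kappa * T > 9, beyond which the Gaussian tail is less
  than 1/100 of the mass inside; hence the ratio is at least 1/(5/2 * 101/100) > 1/e. The gradient
  bound is coordinatewise: |f_i'| <= 7 sqrt kappa on the allowed sets.\<close>

section \<open>Separable densities on real vectors\<close>

lemma nn_integral_gaussian:
  fixes a :: real
  assumes "0 < a"
  shows "(\<integral>\<^sup>+t. ennreal (exp (- a * t^2 / 2)) \<partial>lborel) = ennreal (sqrt (2 * pi / a))"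
proof -
  define \<sigma> where "\<sigma> = 1 / sqrt a"
  have "\<sigma> > 0" and \<sigma>_sq: "\<sigma>^2 = 1 / a"
    using assms by (simp_all add: \<sigma>_def power_divide)
  have "normal_density 0 \<sigma> t = exp (- a * t^2 / 2) / sqrt (2 * pi / a)" for t
    unfolding normal_density_def \<sigma>_sq using assms by (simp add: field_simps)
  then have density: "exp (- a * t^2 / 2) = sqrt (2 * pi / a) * normal_density 0 \<sigma> t" for t
    using assms by simp
  have "(\<integral>\<^sup>+t. ennreal (normal_density 0 \<sigma> t) \<partial>lborel) = 1"
    using \<open>\<sigma> > 0\<close> by (subst nn_integral_eq_integral) auto
  then show ?thesis
    unfolding density using assms
    by (subst ennreal_mult, simp, simp, subst nn_integral_cmult) auto
qed

lemma nn_integral_lborel_vec_prod: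
  fixes F :: "'n::finite \<Rightarrow> real \<Rightarrow> ennreal"
  assumes [measurable]: "\<And>i. F i \<in> borel_measurable borel"
  shows "(\<integral>\<^sup>+x. (\<Prod>i\<in>UNIV. F i (x$i)) \<partial>(lborel :: (real^'n) measure))
    = (\<Prod>i\<in>UNIV. \<integral>\<^sup>+t. F i t \<partial>lborel)"
proof -
  define f where "f b = F (SOME i. axis i (1::real) = b)" for b :: "real^'n"
  have inj: "inj (\<lambda>i::'n. axis i (1::real))"
    by (auto simp: inj_def axis_eq_axis)
  have Basis: "(Basis :: (real^'n) set) = range (\<lambda>i. axis i 1)"
    by (auto simp: Basis_vec_def)
  have f_axis: "f (axis i 1) = F i" for i
    unfolding f_def by (rule arg_cong[where f=F], rule some_equality) (auto simp: axis_eq_axis)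
  have "(\<integral>\<^sup>+x. (\<Prod>b\<in>Basis. f b (x \<bullet> b)) \<partial>(lborel :: (real^'n) measure))
      = (\<Prod>b\<in>Basis. \<integral>\<^sup>+t. f b t \<partial>lborel)"
    by (rule nn_integral_lborel_prod) (auto simp: Basis f_axis)
  then show ?thesis
    unfolding Basis by (simp add: prod.reindex[OF inj] f_axis inner_axis)
qed

lemma indicator_vec_box:
  "indicator {x::'a^'n::finite. \<forall>i. x$i \<in> S i} x = (\<Prod>i\<in>UNIV. indicator (S i) (x$i) :: 'b::comm_semiring_1)"
proof (cases "\<forall>i. x$i \<in> S i")
  case False
  then obtain j where "x$j \<notin> S j" by blast
  then have "(\<Prod>i\<in>UNIV. indicator (S i) (x$i) :: 'b) = 0"
    by (intro prod_zero bexI[of _ j]) auto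
  with False show ?thesis by simp
qed simp

lemma nn_integral_exp_neg_separable:
  fixes g :: "'n::finite \<Rightarrow> real \<Rightarrow> real" and S :: "'n \<Rightarrow> real set"
  assumes [measurable]: "\<And>i. g i \<in> borel_measurable borel" "\<And>i. S i \<in> sets borel"
  shows "(\<integral>\<^sup>+x. ennreal (exp (- (\<Sum>i\<in>UNIV. g i (x$i)))) * indicator {x. \<forall>i. x$i \<in> S i} x \<partial>lborel)
    = (\<Prod>i\<in>UNIV. \<integral>\<^sup>+t. ennreal (exp (- g i t)) * indicator (S i) t \<partial>lborel)"
proof -
  have "ennreal (exp (- (\<Sum>i\<in>UNIV. g i (x$i)))) * indicator {x. \<forall>i. x$i \<in> S i} x
      = (\<Prod>i\<in>UNIV. ennreal (exp (- g i (x$i))) * indicator (S i) (x$i))" for x :: "real^'n"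
    by (simp add: indicator_vec_box exp_sum sum_negf[symmetric] prod_ennreal prod.distrib)
  then show ?thesis
    by (simp only:) (rule nn_integral_lborel_vec_prod, measurable)
qed

lemma emeasure_density_divide:
  assumes [measurable]: "A \<in> sets M" "f \<in> borel_measurable M" and "0 \<le> Z"
  shows "emeasure (density M (\<lambda>x. ennreal (f x / Z))) A
    = ennreal (1 / Z) * (\<integral>\<^sup>+x. ennreal (f x) * indicator A x \<partial>M)"
proof -
  have "emeasure (density M (\<lambda>x. ennreal (f x / Z))) A = (\<integral>\<^sup>+x. ennreal (f x / Z) * indicator A x \<partial>M)"
    by (rule emeasure_density) auto
  also have "\<dots> = (\<integral>\<^sup>+x. ennreal (1 / Z) * (ennreal (f x) * indicator A x) \<partial>M)"
    using \<open>0 \<le> Z\<close> by (intro nn_integral_cong) (simp add: ennreal_mult'[symmetric] mult.assoc[symmetric])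
  also have "\<dots> = ennreal (1 / Z) * (\<integral>\<^sup>+x. ennreal (f x) * indicator A x \<partial>M)"
    by (rule nn_integral_cmult) simp
  finally show ?thesis .
qed

lemma ennreal_integral_exp_neg_separable:
  fixes g :: "'n::finite \<Rightarrow> real \<Rightarrow> real"
  assumes [measurable]: "\<And>i. g i \<in> borel_measurable borel"
    and "\<And>i. (\<integral>\<^sup>+t. ennreal (exp (- g i t)) \<partial>lborel) < \<infinity>"
  shows "ennreal (\<integral>x. exp (- (\<Sum>i\<in>UNIV. g i (x$i))) \<partial>lborel)
    = (\<Prod>i\<in>UNIV. \<integral>\<^sup>+t. ennreal (exp (- g i t)) \<partial>lborel)"
proof -
  have nn: "(\<integral>\<^sup>+x. ennreal (exp (- (\<Sum>i\<in>UNIV. g i (x$i)))) \<partial>(lborel :: (real^'n) measure))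
      = (\<Prod>i\<in>UNIV. \<integral>\<^sup>+t. ennreal (exp (- g i t)) \<partial>lborel)"
    using nn_integral_exp_neg_separable[of g "\<lambda>_. UNIV"] by simp
  moreover have "(\<Prod>i\<in>UNIV. \<integral>\<^sup>+t. ennreal (exp (- g i t)) \<partial>lborel) < \<infinity>"
    using assms(2) by (simp add: less_top[symmetric] ennreal_prod_eq_top)
  ultimately have "integrable lborel (\<lambda>x::real^'n. exp (- (\<Sum>i\<in>UNIV. g i (x$i))))"
    by (intro integrableI_nonneg) auto
  then show ?thesis
    unfolding nn[symmetric] by (subst nn_integral_eq_integral) auto
qed

lemma measure_separable_density_box_ge:
  fixes g :: "'n::finite \<Rightarrow> real \<Rightarrow> real" and S :: "'n \<Rightarrow> real set"
    and F :: "real^'n \<Rightarrow> real"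
  assumes F: "F = (\<lambda>x. \<Sum>i\<in>UNIV. g i (x$i))"
    and [measurable]: "\<And>i. g i \<in> borel_measurable borel" "\<And>i. S i \<in> sets borel"
    and finite: "\<And>i. (\<integral>\<^sup>+t. ennreal (exp (- g i t)) \<partial>lborel) < \<infinity>"
    and pos: "\<And>i. 0 < (\<integral>\<^sup>+t. ennreal (exp (- g i t)) * indicator (S i) t \<partial>lborel)"
    and ratio: "\<And>i. (\<integral>\<^sup>+t. ennreal (exp (- g i t)) \<partial>lborel)
      \<le> ennreal c * (\<integral>\<^sup>+t. ennreal (exp (- g i t)) * indicator (S i) t \<partial>lborel)"
    and "0 < c"
  shows "(1 / c) ^ CARD('n) \<le> measure (density lborel (\<lambda>x. ennreal (exp (- F x) /
      (\<integral>y. exp (- F y) \<partial>lborel)))) {x. \<forall>i. x$i \<in> S i}"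
proof -
  define N where "N i = (\<integral>\<^sup>+t. ennreal (exp (- g i t)) \<partial>lborel)" for i
  define A where "A i = (\<integral>\<^sup>+t. ennreal (exp (- g i t)) * indicator (S i) t \<partial>lborel)" for i
  define \<Omega> where "\<Omega> = {x::real^'n. \<forall>i. x$i \<in> S i}"
  define Z where "Z = (\<integral>y. exp (- F y) \<partial>(lborel :: (real^'n) measure))"
  have [measurable]: "F \<in> borel_measurable borel"
    unfolding F by measurable
  have [measurable]: "\<Omega> \<in> sets borel"
    unfolding \<Omega>_def by measurable
  have [measurable]: "\<Omega> \<in> sets lborel"
    by measurable
  have [measurable]: "(\<lambda>x. exp (- F x)) \<in> borel_measurable lborel"
    by measurable
  have A_le_N: "A i \<le> N i" for i
    unfolding A_def N_def by (intro nn_integral_mono) (auto split: split_indicator)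
  have Z: "ennreal Z = (\<Prod>i\<in>UNIV. N i)"
    unfolding Z_def F N_def by (intro ennreal_integral_exp_neg_separable) (use finite in auto)
  have "N i \<noteq> 0" for i
    using pos[of i] A_le_N[of i] by (auto simp: A_def)
  then have "ennreal Z \<noteq> 0"
    unfolding Z by simp
  then have "0 < Z"
    by (simp add: ennreal_eq_0_iff)
  have "(\<integral>\<^sup>+x. ennreal (exp (- F x)) * indicator \<Omega> x \<partial>lborel) = (\<Prod>i\<in>UNIV. A i)"
    unfolding F \<Omega>_def A_def by (rule nn_integral_exp_neg_separable) simp_all
  then have measure_eq: "emeasure (density lborel (\<lambda>x. ennreal (exp (- F x) / Z))) \<Omega>
      = ennreal (1 / Z) * (\<Prod>i\<in>UNIV. A i)"
    using emeasure_density_divide[of \<Omega> lborel "\<lambda>x. exp (- F x)" Z] \<open>0 < Z\<close> by simp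
  have "ennreal ((1 / c) ^ CARD('n)) * ennreal Z = (\<Prod>i\<in>UNIV. ennreal (1 / c) * N i)"
    using \<open>0 < c\<close> by (simp add: Z prod.distrib ennreal_power)
  also have "\<dots> \<le> (\<Prod>i\<in>UNIV. A i)"
  proof (rule prod_mono_ennreal)
    fix i
    have "ennreal (1 / c) * N i \<le> ennreal (1 / c) * (ennreal c * A i)"
      using ratio[of i] by (intro mult_left_mono) (auto simp: N_def A_def)
    then show "ennreal (1 / c) * N i \<le> A i"
      using \<open>0 < c\<close> by (simp add: ennreal_mult[symmetric] mult.assoc[symmetric])
  qed
  finally have "ennreal (1 / Z) * (ennreal ((1 / c) ^ CARD('n)) * ennreal Z) \<le> ennreal (1 / Z) * (\<Prod>i\<in>UNIV. A i)"
    by (rule mult_left_mono) simp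
  then have "ennreal ((1 / c) ^ CARD('n)) \<le> emeasure (density lborel (\<lambda>x. ennreal (exp (- F x) / Z))) \<Omega>"
    unfolding measure_eq using \<open>0 < Z\<close> \<open>0 < c\<close> by (simp add: ennreal_mult[symmetric])
  moreover have "A i < \<infinity>" for i
    using A_le_N[of i] finite[of i] unfolding N_def by (rule le_less_trans)
  then have "(\<Prod>i\<in>UNIV. A i) < \<infinity>"
    by (simp add: less_top[symmetric] ennreal_prod_eq_top)
  then have "emeasure (density lborel (\<lambda>x. ennreal (exp (- F x) / Z))) \<Omega> < \<infinity>"
    unfolding measure_eq by (simp add: ennreal_mult_less_top)
  ultimately show ?thesis
    unfolding Z_def \<Omega>_def by (simp add: emeasure_eq_ennreal_measure ennreal_le_iff[OF measure_nonneg])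
qed

section \<open>Integrals over periodic cells\<close>

lemma Ioo_subset_UN_cells:
  fixes p :: real and K :: int
  assumes "0 < p"
  shows "{- ((K + 1/2) * p) <..< (K + 1/2) * p} \<subseteq> (\<Union>k\<in>{-K..K}. {k * p - p/2 .. k * p + p/2})"
proof
  fix t assume t: "t \<in> {- ((K + 1/2) * p) <..< (K + 1/2) * p}"
  define k where "k = \<lfloor>t / p + 1/2\<rfloor>"
  have "-(K + 1/2) < t / p" "t / p < K + 1/2"
    using t assms by (auto simp: field_simps)
  moreover have k: "k \<le> t / p + 1/2" "t / p + 1/2 < k + 1"
    unfolding k_def by linarith+
  ultimately have "real_of_int k < real_of_int (K + 1)" "real_of_int (- K) < real_of_int (k + 1)"
    by (simp_all only: of_int_add of_int_minus of_int_1)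
  then have "k \<in> {-K..K}"
    unfolding of_int_less_iff by auto
  moreover have "\<bar>t / p - k\<bar> \<le> 1/2"
    using k unfolding abs_le_iff by linarith
  then have "p * \<bar>t / p - k\<bar> \<le> p / 2"
    using assms by (simp add: mult_left_mono)
  moreover have "t - k * p = p * (t / p - k)"
    using assms by (simp add: algebra_simps)
  ultimately have "k \<in> {-K..K}" "\<bar>t - k * p\<bar> \<le> p / 2"
    using assms by (simp_all add: abs_mult)
  then show "t \<in> (\<Union>k\<in>{-K..K}. {k * p - p/2 .. k * p + p/2})"
    unfolding abs_le_iff by (intro UN_I[of k]) auto
qed

lemma disjoint_family_on_cells:
  fixes p w :: real
  assumes "0 \<le> w" "2 * w < p"
  shows "disjoint_family_on (\<lambda>k::int. {k * p - w .. k * p + w}) A"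
  unfolding disjoint_family_on_def
proof (intro ballI impI)
  fix k l :: int
  assume "k \<noteq> l"
  then have "1 \<le> \<bar>real_of_int k - real_of_int l\<bar>"
    by (metis of_int_abs of_int_diff of_int_1_le_iff zero_less_abs_iff int_one_le_iff_zero_less
        right_minus_eq)
  moreover have "0 < p"
    using assms by linarith
  ultimately have "p \<le> \<bar>real_of_int k - real_of_int l\<bar> * p"
    using mult_right_mono[of 1 _ p] by simp
  also have "\<dots> = \<bar>k * p - l * p\<bar>"
    using \<open>0 < p\<close> by (simp add: abs_mult left_diff_distrib[symmetric])
  finally show "{k * p - w .. k * p + w} \<inter> {l * p - w .. l * p + w} = {}"
    using assms by auto
qed

lemma nn_integral_indicator_UN_le_sum:
  assumes "finite A" "\<And>i. i \<in> A \<Longrightarrow> B i \<in> sets M" "f \<in> borel_measurable M"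
  shows "(\<integral>\<^sup>+x. f x * indicator (\<Union>(B ` A)) x \<partial>M) \<le> (\<Sum>i\<in>A. \<integral>\<^sup>+x. f x * indicator (B i) x \<partial>M)"
proof -
  have "f x * indicator (\<Union>(B ` A)) x \<le> (\<Sum>i\<in>A. f x * indicator (B i) x)" for x
  proof (cases "x \<in> \<Union>(B ` A)")
    case True
    then obtain j where "j \<in> A" "x \<in> B j" by blast
    then have "f x * indicator (B j) x \<le> (\<Sum>i\<in>A. f x * indicator (B i) x)"
      using assms(1) by (intro member_le_sum) auto
    then show ?thesis using \<open>x \<in> B j\<close> True by simp
  qed simp
  then have "(\<integral>\<^sup>+x. f x * indicator (\<Union>(B ` A)) x \<partial>M) \<le> (\<integral>\<^sup>+x. (\<Sum>i\<in>A. f x * indicator (B i) x) \<partial>M)"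
    by (rule nn_integral_mono)
  also have "\<dots> = (\<Sum>i\<in>A. \<integral>\<^sup>+x. f x * indicator (B i) x \<partial>M)"
    using assms by (intro nn_integral_sum) auto
  finally show ?thesis .
qed

lemma nn_integral_indicator_UN_disjoint:
  assumes "finite A" "disjoint_family_on B A" "\<And>i. i \<in> A \<Longrightarrow> B i \<in> sets M"
    "f \<in> borel_measurable M"
  shows "(\<integral>\<^sup>+x. f x * indicator (\<Union>(B ` A)) x \<partial>M) = (\<Sum>i\<in>A. \<integral>\<^sup>+x. f x * indicator (B i) x \<partial>M)"
proof -
  have "f x * indicator (\<Union>(B ` A)) x = (\<Sum>i\<in>A. f x * indicator (B i) x)" for x
    unfolding indicator_UN_disjoint[OF assms(1,2)] sum_distrib_left ..
  then show ?thesis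
    using assms by (simp only:) (rule nn_integral_sum, auto)
qed

lemma nn_integral_Icc_le:
  fixes f :: "real \<Rightarrow> real"
  assumes "l \<le> u" "0 \<le> M" "\<And>t. t \<in> {l..u} \<Longrightarrow> f t \<le> M"
  shows "(\<integral>\<^sup>+t. ennreal (f t) * indicator {l..u} t \<partial>lborel) \<le> ennreal ((u - l) * M)"
proof -
  have "(\<integral>\<^sup>+t. ennreal (f t) * indicator {l..u} t \<partial>lborel) \<le> (\<integral>\<^sup>+t. ennreal M * indicator {l..u} t \<partial>lborel)"
    by (intro nn_integral_mono) (auto split: split_indicator intro!: ennreal_leI assms(3))
  also have "\<dots> = ennreal ((u - l) * M)"
    using assms by (simp add: nn_integral_cmult_indicator ennreal_mult mult.commute)
  finally show ?thesis .
qed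

lemma nn_integral_Icc_ge:
  fixes f :: "real \<Rightarrow> real"
  assumes "l \<le> u" "0 \<le> m" "\<And>t. t \<in> {l..u} \<Longrightarrow> m \<le> f t"
  shows "ennreal ((u - l) * m) \<le> (\<integral>\<^sup>+t. ennreal (f t) * indicator {l..u} t \<partial>lborel)"
proof -
  have "ennreal ((u - l) * m) = (\<integral>\<^sup>+t. ennreal m * indicator {l..u} t \<partial>lborel)"
    using assms by (simp add: nn_integral_cmult_indicator ennreal_mult mult.commute)
  also have "\<dots> \<le> (\<integral>\<^sup>+t. ennreal (f t) * indicator {l..u} t \<partial>lborel)"
    by (intro nn_integral_mono) (auto split: split_indicator intro!: ennreal_leI assms(3))
  finally show ?thesis .
qed

section \<open>The cosine-perturbed coordinate\<close>

lemma exp_one_tenth_le: "exp (1/10 :: real) \<le> 9/8"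
proof -
  have "9/10 \<le> exp (-1/10 :: real)"
    using exp_ge_add_one_self[of "-1/10 :: real"] by simp
  then have "exp (1/10 :: real) * (9/10) \<le> exp (1/10) * exp (-1/10)"
    by (intro mult_left_mono) auto
  then show ?thesis
    by (simp add: exp_add[symmetric])
qed

lemma exp_13_ge: "8192 \<le> exp (13 :: real)"
proof -
  have "(2 :: real) ^ 13 \<le> exp 1 ^ 13"
    using exp_ge_add_one_self[of "1 :: real"] by (intro power_mono) simp_all
  then show ?thesis
    by (simp add: exp_of_nat_mult[symmetric])
qed

lemma exp_one_ge: "101/40 \<le> exp (1 :: real)"
proof -
  have "- inverse (2^32) \<le> exp 1 - 5837465777 / (2147483648 :: real)"
    using e_approx_32 by (simp only: abs_le_iff) linarith
  then show ?thesis
    by simp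
qed

definition f_cos :: "real \<Rightarrow> real \<Rightarrow> real \<Rightarrow> real" where
  "f_cos \<kappa> h c = \<kappa>/3 * c^2 - \<kappa>*h/3 * cos (c / sqrt h)"

definition near_minima :: "int \<Rightarrow> real \<Rightarrow> real set" where
  "near_minima K h = {t. \<exists>k::int. \<bar>k\<bar> \<le> K \<and>
     - (9/20) * pi * sqrt h + 2 * pi * k * sqrt h \<le> t \<and> t \<le> (9/20) * pi * sqrt h + 2 * pi * k * sqrt h}"

lemma borel_measurable_f_cos [measurable]: "f_cos \<kappa> h \<in> borel_measurable borel"
  unfolding f_cos_def by measurable

lemma near_minima_eq_UN:
  "near_minima K h = (\<Union>k\<in>{-K..K}.
     {real_of_int k * (2 * pi * sqrt h) - 9/20 * pi * sqrt h ..
      real_of_int k * (2 * pi * sqrt h) + 9/20 * pi * sqrt h})"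
  unfolding near_minima_def by (auto simp: abs_le_iff algebra_simps intro!: bexI)

lemma f_cos_bounds:
  assumes "0 \<le> \<kappa>" "0 \<le> h"
  shows "\<kappa>/3 * t^2 - \<kappa>*h/3 \<le> f_cos \<kappa> h t" "f_cos \<kappa> h t \<le> \<kappa>/3 * t^2 + \<kappa>*h/3"
proof -
  have "\<bar>\<kappa>*h/3 * cos (t / sqrt h)\<bar> \<le> \<kappa>*h/3"
    using assms by (simp add: abs_mult mult_left_le)
  then show "\<kappa>/3 * t^2 - \<kappa>*h/3 \<le> f_cos \<kappa> h t" "f_cos \<kappa> h t \<le> \<kappa>/3 * t^2 + \<kappa>*h/3"
    unfolding f_cos_def by (simp_all add: abs_le_iff)
qed

lemma f_cos_near:
  assumes "0 \<le> \<kappa>" "0 \<le> h" "\<bar>t - r\<bar> \<le> w"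
  shows "\<bar>f_cos \<kappa> h t - \<kappa>/3 * r^2\<bar> \<le> \<kappa>/3 * (w * (2 * \<bar>r\<bar> + w)) + \<kappa>*h/3"
proof -
  have "\<bar>t^2 - r^2\<bar> = \<bar>t - r\<bar> * \<bar>t + r\<bar>"
    by (simp add: power2_eq_square abs_mult[symmetric] algebra_simps)
  also have "\<dots> \<le> w * (2 * \<bar>r\<bar> + w)"
    using assms(3) by (intro mult_mono) auto
  finally have "\<kappa>/3 * \<bar>t^2 - r^2\<bar> \<le> \<kappa>/3 * (w * (2 * \<bar>r\<bar> + w))"
    using assms(1) by (intro mult_left_mono) auto
  moreover have "\<bar>\<kappa>/3 * t^2 - \<kappa>/3 * r^2\<bar> = \<kappa>/3 * \<bar>t^2 - r^2\<bar>"
    unfolding right_diff_distrib[symmetric] abs_mult using assms(1) by simp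
  ultimately have "\<bar>\<kappa>/3 * t^2 - \<kappa>/3 * r^2\<bar> \<le> \<kappa>/3 * (w * (2 * \<bar>r\<bar> + w))"
    by linarith
  then show ?thesis
    using f_cos_bounds[OF assms(1,2), of t] unfolding abs_le_iff by linarith
qed

lemma nn_integral_f_cos_cell_le:
  assumes "0 \<le> \<kappa>" "0 \<le> h" "0 \<le> w" "0 < w'"
    and oscillation: "\<kappa>/3 * (w * (2 * \<bar>r\<bar> + w)) + \<kappa>/3 * (w' * (2 * \<bar>r\<bar> + w')) + 2 * (\<kappa>*h/3) \<le> \<delta>"
  shows "(\<integral>\<^sup>+t. ennreal (exp (- f_cos \<kappa> h t)) * indicator {r - w .. r + w} t \<partial>lborel)
    \<le> ennreal (w / w' * exp \<delta>) * (\<integral>\<^sup>+t. ennreal (exp (- f_cos \<kappa> h t)) * indicator {r - w' .. r + w'} t \<partial>lborel)"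
proof -
  define M where "M = exp (- \<kappa>/3 * r^2 + (\<kappa>/3 * (w * (2 * \<bar>r\<bar> + w)) + \<kappa>*h/3))"
  define m where "m = exp (- \<kappa>/3 * r^2 - (\<kappa>/3 * (w' * (2 * \<bar>r\<bar> + w')) + \<kappa>*h/3))"
  have upper: "(\<integral>\<^sup>+t. ennreal (exp (- f_cos \<kappa> h t)) * indicator {r - w .. r + w} t \<partial>lborel)
      \<le> ennreal ((r + w - (r - w)) * M)"
  proof (rule nn_integral_Icc_le)
    fix t assume "t \<in> {r - w .. r + w}"
    then have "\<bar>f_cos \<kappa> h t - \<kappa>/3 * r^2\<bar> \<le> \<kappa>/3 * (w * (2 * \<bar>r\<bar> + w)) + \<kappa>*h/3"
      using f_cos_near[OF assms(1,2)] by auto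
    then show "exp (- f_cos \<kappa> h t) \<le> M"
      unfolding M_def exp_le_cancel_iff abs_le_iff by linarith
  qed (use assms in \<open>auto simp: M_def\<close>)
  have lower: "ennreal ((r + w' - (r - w')) * m)
      \<le> (\<integral>\<^sup>+t. ennreal (exp (- f_cos \<kappa> h t)) * indicator {r - w' .. r + w'} t \<partial>lborel)"
  proof (rule nn_integral_Icc_ge)
    fix t assume "t \<in> {r - w' .. r + w'}"
    then have "\<bar>f_cos \<kappa> h t - \<kappa>/3 * r^2\<bar> \<le> \<kappa>/3 * (w' * (2 * \<bar>r\<bar> + w')) + \<kappa>*h/3"
      using f_cos_near[OF assms(1,2)] by auto
    then show "m \<le> exp (- f_cos \<kappa> h t)"
      unfolding m_def exp_le_cancel_iff abs_le_iff by linarith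
  qed (use assms in \<open>auto simp: m_def\<close>)
  have "M = m * exp (\<kappa>/3 * (w * (2 * \<bar>r\<bar> + w)) + \<kappa>/3 * (w' * (2 * \<bar>r\<bar> + w')) + 2 * (\<kappa>*h/3))"
    unfolding M_def m_def by (simp add: exp_add[symmetric] algebra_simps)
  also have "\<dots> \<le> m * exp \<delta>"
    using oscillation by (simp add: m_def)
  finally have "(r + w - (r - w)) * M \<le> w / w' * exp \<delta> * ((r + w' - (r - w')) * m)"
    using assms(3,4) mult_left_mono[of M "m * exp \<delta>" "2 * w"] by (simp add: field_simps)
  then have "ennreal ((r + w - (r - w)) * M) \<le> ennreal (w / w' * exp \<delta>) * ennreal ((r + w' - (r - w')) * m)"
    using assms(3,4) by (simp add: ennreal_mult'[symmetric] ennreal_leI m_def)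
  also have "\<dots> \<le> ennreal (w / w' * exp \<delta>) *
      (\<integral>\<^sup>+t. ennreal (exp (- f_cos \<kappa> h t)) * indicator {r - w' .. r + w'} t \<partial>lborel)"
    using lower by (rule mult_left_mono) simp
  finally show ?thesis
    using upper by (rule order_trans[rotated])
qed

lemma nn_integral_f_cos_tail_le:
  assumes "0 < \<kappa>" "0 \<le> h" "9 \<le> sqrt \<kappa> * T"
  shows "(\<integral>\<^sup>+t. ennreal (exp (- f_cos \<kappa> h t)) * indicator (- {-T<..<T}) t \<partial>lborel)
    \<le> ennreal (exp (\<kappa>*h/3 - 27/2) * sqrt (6 * pi / \<kappa>))"
proof -
  have pointwise: "ennreal (exp (- f_cos \<kappa> h t)) * indicator (- {-T<..<T}) t
      \<le> ennreal (exp (\<kappa>*h/3 - 27/2)) * ennreal (exp (- (\<kappa>/3) * t^2 / 2))" for t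
  proof (cases "t \<in> {-T<..<T}")
    case False
    then have "sqrt \<kappa> * T \<le> sqrt \<kappa> * \<bar>t\<bar>"
      using assms(1) by (intro mult_left_mono) auto
    then have "9 \<le> sqrt \<kappa> * \<bar>t\<bar>"
      using assms(3) by linarith
    then have "9 * 9 \<le> (sqrt \<kappa> * \<bar>t\<bar>) * (sqrt \<kappa> * \<bar>t\<bar>)"
      by (intro mult_mono) auto
    then have "81 \<le> \<kappa> * t^2"
      using assms(1) by (simp add: power2_eq_square algebra_simps)
    then have "- f_cos \<kappa> h t \<le> (\<kappa>*h/3 - 27/2) + (- (\<kappa>/3) * t^2 / 2)"
      using f_cos_bounds(1)[of \<kappa> h t] assms(1,2) by simp
    then show ?thesis
      using False by (simp add: ennreal_mult'[symmetric] exp_add[symmetric])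
  qed simp
  have "(\<integral>\<^sup>+t. ennreal (exp (- f_cos \<kappa> h t)) * indicator (- {-T<..<T}) t \<partial>lborel)
      \<le> (\<integral>\<^sup>+t. ennreal (exp (\<kappa>*h/3 - 27/2)) * ennreal (exp (- (\<kappa>/3) * t^2 / 2)) \<partial>lborel)"
    by (intro nn_integral_mono pointwise)
  also have "\<dots> = ennreal (exp (\<kappa>*h/3 - 27/2)) * ennreal (sqrt (2 * pi / (\<kappa>/3)))"
    using nn_integral_gaussian[of "\<kappa>/3"] assms(1) by (simp add: nn_integral_cmult)
  finally show ?thesis
    by (simp add: ennreal_mult'[symmetric])
qed

lemma nn_integral_f_cos_Ioo_ge:
  assumes "0 < \<kappa>" "0 \<le> h" "1 < sqrt \<kappa> * T"
  shows "ennreal (2 / sqrt \<kappa> * exp (- 1/3 - \<kappa>*h/3))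
    \<le> (\<integral>\<^sup>+t. ennreal (exp (- f_cos \<kappa> h t)) * indicator {-T<..<T} t \<partial>lborel)"
proof -
  have "1 / sqrt \<kappa> < T"
    using assms(1,3) by (simp add: field_simps)
  have "ennreal ((1 / sqrt \<kappa> - - (1 / sqrt \<kappa>)) * exp (- 1/3 - \<kappa>*h/3))
      \<le> (\<integral>\<^sup>+t. ennreal (exp (- f_cos \<kappa> h t)) * indicator {- (1 / sqrt \<kappa>) .. 1 / sqrt \<kappa>} t \<partial>lborel)"
  proof (rule nn_integral_Icc_ge)
    fix t assume "t \<in> {- (1 / sqrt \<kappa>) .. 1 / sqrt \<kappa>}"
    then have "sqrt \<kappa> * \<bar>t\<bar> \<le> sqrt \<kappa> * (1 / sqrt \<kappa>)"
      using assms(1) by (intro mult_left_mono) auto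
    then have "sqrt \<kappa> * \<bar>t\<bar> \<le> 1"
      using assms(1) by simp
    then have "(sqrt \<kappa> * \<bar>t\<bar>) * (sqrt \<kappa> * \<bar>t\<bar>) \<le> 1 * 1"
      using assms(1) by (intro mult_mono) auto
    then have "\<kappa> * t^2 \<le> 1"
      using assms(1) by (simp add: power2_eq_square algebra_simps)
    then show "exp (- 1/3 - \<kappa>*h/3) \<le> exp (- f_cos \<kappa> h t)"
      using f_cos_bounds(2)[of \<kappa> h t] assms(1,2) by simp
  qed (use assms in auto)
  also have "\<dots> \<le> (\<integral>\<^sup>+t. ennreal (exp (- f_cos \<kappa> h t)) * indicator {-T<..<T} t \<partial>lborel)"
    using \<open>1 / sqrt \<kappa> < T\<close> by (intro nn_integral_mono) (auto split: split_indicator)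
  finally show ?thesis
    by simp
qed

lemma nn_integral_f_cos_finite:
  assumes "0 < \<kappa>" "0 \<le> h"
  shows "(\<integral>\<^sup>+t. ennreal (exp (- f_cos \<kappa> h t)) \<partial>lborel) < \<infinity>"
proof -
  have "(\<integral>\<^sup>+t. ennreal (exp (- f_cos \<kappa> h t)) \<partial>lborel)
      \<le> (\<integral>\<^sup>+t. ennreal (exp (\<kappa>*h/3)) * ennreal (exp (- (2*\<kappa>/3) * t^2 / 2)) \<partial>lborel)"
  proof (intro nn_integral_mono)
    fix t
    have "- f_cos \<kappa> h t \<le> \<kappa>*h/3 + (- (2*\<kappa>/3) * t^2 / 2)"
      using f_cos_bounds(1)[of \<kappa> h t] assms by simp
    then show "ennreal (exp (- f_cos \<kappa> h t))
        \<le> ennreal (exp (\<kappa>*h/3)) * ennreal (exp (- (2*\<kappa>/3) * t^2 / 2))"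
      by (simp add: ennreal_mult'[symmetric] exp_add[symmetric])
  qed
  also have "\<dots> = ennreal (exp (\<kappa>*h/3)) * ennreal (sqrt (2 * pi / (2*\<kappa>/3)))"
    using nn_integral_gaussian[of "2*\<kappa>/3"] assms(1) by (simp add: nn_integral_cmult)
  finally show ?thesis
    by (simp add: ennreal_mult_less_top order_le_less_trans)
qed

lemma sqrt_mult_le_of_pi_sqrt_mult_le:
  assumes "0 \<le> \<kappa>" "0 \<le> h" "pi * sqrt (\<kappa> * h) \<le> 1/100"
  shows "sqrt (\<kappa> * h) \<le> 1/100" "\<kappa> * h \<le> 1/10000"
proof -
  have "1 * sqrt (\<kappa> * h) \<le> pi * sqrt (\<kappa> * h)"
    using pi_gt3 assms(1,2) by (intro mult_right_mono) auto
  then show "sqrt (\<kappa> * h) \<le> 1/100"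
    using assms(3) by linarith
  then have "(sqrt (\<kappa> * h))^2 \<le> (1/100)^2"
    using assms(1,2) by (intro power_mono) simp_all
  then show "\<kappa> * h \<le> 1/10000"
    using assms(1,2) by (simp add: power2_eq_square)
qed

lemma f_cos_tail_bound_le_core_bound:
  assumes "0 < \<kappa>" "0 \<le> b" "b \<le> 1/12"
  shows "exp (b - 27/2) * sqrt (6 * pi / \<kappa>) \<le> 1/100 * (2 / sqrt \<kappa> * exp (- 1/3 - b))"
proof -
  have "exp (b - 27/2) = exp (- 1/3 - b) * exp (2 * b + 1/3 - 27/2)"
    by (simp add: exp_add[symmetric])
  also have "\<dots> \<le> exp (- 1/3 - b) * (1 / 8192)"
  proof (rule mult_left_mono)
    have "exp (2 * b + 1/3 - 27/2) \<le> exp (-13)"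
      using assms(3) by simp
    also have "\<dots> \<le> 1 / 8192"
      using exp_13_ge by (simp add: exp_minus field_simps)
    finally show "exp (2 * b + 1/3 - 27/2) \<le> 1 / 8192" .
  qed simp
  finally have "exp (b - 27/2) \<le> exp (- 1/3 - b) / 8192"
    by simp
  moreover have "sqrt (6 * pi / \<kappa>) \<le> 5 / sqrt \<kappa>"
  proof -
    have "sqrt (6 * pi) \<le> sqrt 25"
      using pi_less_4 by (intro real_sqrt_le_mono) simp
    then show ?thesis
      using assms(1) by (simp add: real_sqrt_divide divide_right_mono)
  qed
  ultimately have "exp (b - 27/2) * sqrt (6 * pi / \<kappa>) \<le> exp (- 1/3 - b) / 8192 * (5 / sqrt \<kappa>)"
    using assms(1) by (intro mult_mono) auto
  also have "\<dots> = 5/8192 * (exp (- 1/3 - b) / sqrt \<kappa>)"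
    by simp
  also have "\<dots> \<le> 2/100 * (exp (- 1/3 - b) / sqrt \<kappa>)"
    using assms(1) by (intro mult_right_mono) simp_all
  finally show ?thesis
    by simp
qed

lemma nn_integral_f_cos_tail_le_Ioo:
  assumes "0 < \<kappa>" "0 \<le> h" "\<kappa> * h \<le> 1/4" "9 < sqrt \<kappa> * T"
  shows "(\<integral>\<^sup>+t. ennreal (exp (- f_cos \<kappa> h t)) * indicator (- {-T<..<T}) t \<partial>lborel)
    \<le> ennreal (1/100) * (\<integral>\<^sup>+t. ennreal (exp (- f_cos \<kappa> h t)) * indicator {-T<..<T} t \<partial>lborel)"
proof -
  have "(\<integral>\<^sup>+t. ennreal (exp (- f_cos \<kappa> h t)) * indicator (- {-T<..<T}) t \<partial>lborel)
      \<le> ennreal (exp (\<kappa>*h/3 - 27/2) * sqrt (6 * pi / \<kappa>))"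
    using assms(1,2,4) by (intro nn_integral_f_cos_tail_le) auto
  also have "\<dots> \<le> ennreal (1/100) * ennreal (2 / sqrt \<kappa> * exp (- 1/3 - \<kappa>*h/3))"
    using f_cos_tail_bound_le_core_bound[of \<kappa> "\<kappa>*h/3"] assms(1-3)
    by (simp add: ennreal_mult'[symmetric] ennreal_leI)
  also have "\<dots> \<le> ennreal (1/100) * (\<integral>\<^sup>+t. ennreal (exp (- f_cos \<kappa> h t)) * indicator {-T<..<T} t \<partial>lborel)"
    using assms(1,2,4) by (intro mult_left_mono nn_integral_f_cos_Ioo_ge) auto
  finally show ?thesis .
qed

lemma f_cos_cell_oscillation_le:
  assumes "0 \<le> \<kappa>" "0 < h" "pi * sqrt (\<kappa> * h) \<le> 1/100" "sqrt \<kappa> * \<bar>r\<bar> \<le> 10"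
  shows "\<kappa>/3 * (pi * sqrt h * (2 * \<bar>r\<bar> + pi * sqrt h))
    + \<kappa>/3 * (9/20 * pi * sqrt h * (2 * \<bar>r\<bar> + 9/20 * pi * sqrt h)) + 2 * (\<kappa>*h/3) \<le> 1/10"
proof -
  define q where "q = sqrt \<kappa>"
  define s where "s = sqrt h"
  define x where "x = pi * q * s"
  have \<kappa>: "\<kappa> = q * q" and h: "h = s * s"
    using assms(1,2) by (simp_all add: q_def s_def)
  have "0 \<le> q" "0 \<le> s"
    using assms(1,2) by (simp_all add: q_def s_def)
  have x: "0 \<le> x" "x \<le> 1/100"
    using assms(3) \<open>0 \<le> q\<close> \<open>0 \<le> s\<close> by (simp_all add: x_def q_def s_def real_sqrt_mult)
  have "x * (q * \<bar>r\<bar>) \<le> 1/100 * 10"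
    using x assms(4) \<open>0 \<le> q\<close> by (intro mult_mono) (auto simp: q_def)
  moreover have "x * x \<le> 1/100 * (1/100)"
    using x by (intro mult_mono) auto
  moreover have "9 * ((q * s) * (q * s)) \<le> (pi * pi) * ((q * s) * (q * s))"
    using pi_gt3 mult_mono[of 3 pi 3 pi] by (intro mult_right_mono) auto
  then have "9 * ((q * s) * (q * s)) \<le> x * x"
    by (simp add: x_def algebra_simps)
  moreover have "\<kappa>/3 * (pi * sqrt h * (2 * \<bar>r\<bar> + pi * sqrt h))
      + \<kappa>/3 * (9/20 * pi * sqrt h * (2 * \<bar>r\<bar> + 9/20 * pi * sqrt h)) + 2 * (\<kappa>*h/3)
      = 29/30 * (x * (q * \<bar>r\<bar>)) + 481/1200 * (x * x) + 2/3 * ((q * s) * (q * s))"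
    unfolding \<kappa> h x_def s_def[symmetric] using \<open>0 \<le> s\<close> by (simp add: field_simps)
  ultimately show ?thesis
    by linarith
qed

lemma nn_integral_f_cos_period_cell_le:
  assumes "0 \<le> \<kappa>" "0 < h" "pi * sqrt (\<kappa> * h) \<le> 1/100" "sqrt \<kappa> * \<bar>r\<bar> \<le> 10"
  shows "(\<integral>\<^sup>+t. ennreal (exp (- f_cos \<kappa> h t)) * indicator {r - pi * sqrt h .. r + pi * sqrt h} t \<partial>lborel)
    \<le> ennreal (5/2) * (\<integral>\<^sup>+t. ennreal (exp (- f_cos \<kappa> h t)) *
      indicator {r - 9/20 * pi * sqrt h .. r + 9/20 * pi * sqrt h} t \<partial>lborel)"
proof -
  have "(\<integral>\<^sup>+t. ennreal (exp (- f_cos \<kappa> h t)) * indicator {r - pi * sqrt h .. r + pi * sqrt h} t \<partial>lborel)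
      \<le> ennreal (pi * sqrt h / (9/20 * pi * sqrt h) * exp (1/10)) * (\<integral>\<^sup>+t. ennreal (exp (- f_cos \<kappa> h t)) *
        indicator {r - 9/20 * pi * sqrt h .. r + 9/20 * pi * sqrt h} t \<partial>lborel)"
    using assms(1,2) f_cos_cell_oscillation_le[OF assms] by (intro nn_integral_f_cos_cell_le) simp_all
  moreover have "pi * sqrt h / (9/20 * pi * sqrt h) * exp (1/10) \<le> 5/2"
    using exp_one_tenth_le assms(2) by simp
  ultimately show ?thesis
    by (simp add: order_trans[OF _ mult_right_mono] ennreal_leI)
qed

lemma nn_integral_f_cos_Ioo_le_near_minima:
  fixes K :: int
  assumes "0 \<le> \<kappa>" "0 < h" "pi * sqrt (\<kappa> * h) \<le> 1/100" "K * (pi * sqrt (\<kappa> * h)) \<le> 5"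
  shows "(\<integral>\<^sup>+t. ennreal (exp (- f_cos \<kappa> h t)) *
      indicator {- ((K + 1/2) * (2 * pi * sqrt h)) <..< (K + 1/2) * (2 * pi * sqrt h)} t \<partial>lborel)
    \<le> ennreal (5/2) * (\<integral>\<^sup>+t. ennreal (exp (- f_cos \<kappa> h t)) * indicator (near_minima K h) t \<partial>lborel)"
proof -
  define p where "p = 2 * pi * sqrt h"
  define w where "w = 9/20 * pi * sqrt h"
  define \<phi> where "\<phi> t = ennreal (exp (- f_cos \<kappa> h t))" for t
  have [measurable]: "\<phi> \<in> borel_measurable borel"
    unfolding \<phi>_def by measurable
  have "0 < p" "0 < w" "2 * w < p"
    using assms(2) by (simp_all add: p_def w_def)
  have cell: "(\<integral>\<^sup>+t. \<phi> t * indicator {k * p - p/2 .. k * p + p/2} t \<partial>lborel)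
      \<le> ennreal (5/2) * (\<integral>\<^sup>+t. \<phi> t * indicator {k * p - w .. k * p + w} t \<partial>lborel)"
    if "k \<in> {-K..K}" for k
  proof -
    have "sqrt \<kappa> * \<bar>k * p\<bar> = 2 * \<bar>real_of_int k\<bar> * (pi * sqrt (\<kappa> * h))"
      using assms(2) by (simp add: p_def abs_mult real_sqrt_mult)
    also have "\<dots> \<le> 2 * K * (pi * sqrt (\<kappa> * h))"
      using that assms(1,2) by (intro mult_right_mono) auto
    finally have "sqrt \<kappa> * \<bar>k * p\<bar> \<le> 10"
      using assms(4) by linarith
    then show ?thesis
      using nn_integral_f_cos_period_cell_le[OF assms(1-3)] by (simp add: \<phi>_def p_def w_def)
  qed
  have "(\<integral>\<^sup>+t. \<phi> t * indicator {- ((K + 1/2) * p) <..< (K + 1/2) * p} t \<partial>lborel)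
      \<le> (\<integral>\<^sup>+t. \<phi> t * indicator (\<Union>k\<in>{-K..K}. {k * p - p/2 .. k * p + p/2}) t \<partial>lborel)"
    using Ioo_subset_UN_cells[OF \<open>0 < p\<close>, of K]
    by (intro nn_integral_mono mult_left_mono indicator_leI) (blast | simp)+
  also have "\<dots> \<le> (\<Sum>k\<in>{-K..K}. \<integral>\<^sup>+t. \<phi> t * indicator {k * p - p/2 .. k * p + p/2} t \<partial>lborel)"
    by (rule nn_integral_indicator_UN_le_sum) auto
  also have "\<dots> \<le> (\<Sum>k\<in>{-K..K}. ennreal (5/2) * \<integral>\<^sup>+t. \<phi> t * indicator {k * p - w .. k * p + w} t \<partial>lborel)"
    by (intro sum_mono cell)
  also have "\<dots> = ennreal (5/2) * (\<integral>\<^sup>+t. \<phi> t * indicator (\<Union>k\<in>{-K..K}. {k * p - w .. k * p + w}) t \<partial>lborel)"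
    using \<open>0 < w\<close> \<open>2 * w < p\<close>
    by (subst nn_integral_indicator_UN_disjoint) (auto simp: sum_distrib_left disjoint_family_on_cells)
  finally show ?thesis
    unfolding \<phi>_def p_def w_def near_minima_eq_UN by simp
qed

lemma f_cos_mass_concentration:
  fixes K :: int
  assumes "0 < \<kappa>" "0 < h" "pi * sqrt (\<kappa> * h) \<le> 1/100"
    and "9/2 \<le> K * (pi * sqrt (\<kappa> * h))" "K * (pi * sqrt (\<kappa> * h)) \<le> 5"
  shows "(\<integral>\<^sup>+t. ennreal (exp (- f_cos \<kappa> h t)) \<partial>lborel)
      \<le> ennreal (exp 1) * (\<integral>\<^sup>+t. ennreal (exp (- f_cos \<kappa> h t)) * indicator (near_minima K h) t \<partial>lborel)"
    and "0 < (\<integral>\<^sup>+t. ennreal (exp (- f_cos \<kappa> h t)) * indicator (near_minima K h) t \<partial>lborel)"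
proof -
  define T where "T = (K + 1/2) * (2 * pi * sqrt h)"
  define A where "A = (\<integral>\<^sup>+t. ennreal (exp (- f_cos \<kappa> h t)) * indicator (near_minima K h) t \<partial>lborel)"
  define Core where "Core = (\<integral>\<^sup>+t. ennreal (exp (- f_cos \<kappa> h t)) * indicator {-T<..<T} t \<partial>lborel)"
  define Tail where "Tail = (\<integral>\<^sup>+t. ennreal (exp (- f_cos \<kappa> h t)) * indicator (- {-T<..<T}) t \<partial>lborel)"
  have "sqrt \<kappa> * T = 2 * (K * (pi * sqrt (\<kappa> * h))) + pi * sqrt (\<kappa> * h)"
    using assms(1,2) by (simp add: T_def real_sqrt_mult algebra_simps)
  moreover have "0 < pi * sqrt (\<kappa> * h)"
    using assms(1,2) by simp
  ultimately have "9 < sqrt \<kappa> * T"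
    using assms(4) by linarith
  moreover have "\<kappa> * h \<le> 1/4"
    using sqrt_mult_le_of_pi_sqrt_mult_le(2)[OF _ _ assms(3)] assms(1,2) by simp
  ultimately have tail: "Tail \<le> ennreal (1/100) * Core"
    unfolding Tail_def Core_def using assms(1,2) by (intro nn_integral_f_cos_tail_le_Ioo) auto
  have core: "Core \<le> ennreal (5/2) * A"
    unfolding Core_def A_def T_def
    using nn_integral_f_cos_Ioo_le_near_minima[OF _ assms(2,3,5)] assms(1) by simp
  have "(\<integral>\<^sup>+t. ennreal (exp (- f_cos \<kappa> h t)) \<partial>lborel) = Core + Tail"
    unfolding Core_def Tail_def
    by (subst nn_integral_add[symmetric]) (auto intro!: nn_integral_cong split: split_indicator)
  also have "\<dots> \<le> ennreal (101/100) * Core"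
    using tail ennreal_plus[of 1 "1/100"] by (simp add: distrib_right add_left_mono)
  also have "\<dots> \<le> ennreal (101/100) * (ennreal (5/2) * A)"
    using core by (rule mult_left_mono) simp
  also have "\<dots> \<le> ennreal (exp 1) * A"
    using exp_one_ge by (simp add: mult.assoc[symmetric] ennreal_mult'[symmetric] mult_right_mono ennreal_leI)
  finally show "(\<integral>\<^sup>+t. ennreal (exp (- f_cos \<kappa> h t)) \<partial>lborel)
      \<le> ennreal (exp 1) * (\<integral>\<^sup>+t. ennreal (exp (- f_cos \<kappa> h t)) * indicator (near_minima K h) t \<partial>lborel)"
    unfolding A_def .
  have "0 < Core"
    unfolding Core_def using assms(1,2) \<open>9 < sqrt \<kappa> * T\<close>
    by (intro order_less_le_trans[OF _ nn_integral_f_cos_Ioo_ge]) auto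
  with core show "0 < (\<integral>\<^sup>+t. ennreal (exp (- f_cos \<kappa> h t)) * indicator (near_minima K h) t \<partial>lborel)"
    unfolding A_def by (auto simp: zero_less_iff_neq_zero)
qed

section \<open>The Gaussian coordinate and the parameter K_h\<close>

lemma gaussian_mass_concentration:
  shows "(\<integral>\<^sup>+t. ennreal (exp (- (t^2 / 2))) \<partial>lborel)
      \<le> ennreal (exp 1) * (\<integral>\<^sup>+t. ennreal (exp (- (t^2 / 2))) * indicator {-2..2} t \<partial>lborel)"
    and "(\<integral>\<^sup>+t. ennreal (exp (- (t^2 / 2))) \<partial>lborel) < \<infinity>"
    and "0 < (\<integral>\<^sup>+t. ennreal (exp (- (t^2 / 2))) * indicator {-2..2} t \<partial>lborel)"
proof -
  have total: "(\<integral>\<^sup>+t. ennreal (exp (- (t^2 / 2))) \<partial>lborel) = ennreal (sqrt (2 * pi))"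
    using nn_integral_gaussian[of 1] by simp
  have "ennreal ((1 - (-1)) * exp (- 1/2))
      \<le> (\<integral>\<^sup>+t. ennreal (exp (- (t^2 / 2))) * indicator {-1..1} t \<partial>lborel)"
  proof (rule nn_integral_Icc_ge)
    fix t :: real
    assume "t \<in> {-1..1}"
    then have "\<bar>t\<bar> * \<bar>t\<bar> \<le> 1 * 1"
      by (intro mult_mono) auto
    then show "exp (- 1/2) \<le> exp (- (t^2 / 2))"
      by (simp add: power2_eq_square)
  qed auto
  also have "\<dots> \<le> (\<integral>\<^sup>+t. ennreal (exp (- (t^2 / 2))) * indicator {-2..2} t \<partial>lborel)"
    by (intro nn_integral_mono mult_left_mono indicator_leI) auto
  finally have core: "ennreal (2 * exp (- 1/2))
      \<le> (\<integral>\<^sup>+t. ennreal (exp (- (t^2 / 2))) * indicator {-2..2} t \<partial>lborel)"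
    by simp
  then show "0 < (\<integral>\<^sup>+t. ennreal (exp (- (t^2 / 2))) * indicator {-2..2} t \<partial>lborel)"
    by (rule order_less_le_trans[rotated]) simp
  show "(\<integral>\<^sup>+t. ennreal (exp (- (t^2 / 2))) \<partial>lborel) < \<infinity>"
    unfolding total by simp
  have "sqrt (2 * pi) \<le> sqrt 9"
    using pi_less_4 by (intro real_sqrt_le_mono) simp
  also have "\<dots> \<le> 2 * (1 + 1/2)"
    by simp
  also have "\<dots> \<le> 2 * exp (1/2)"
    using exp_ge_add_one_self[of "1/2 :: real"] by simp
  also have "\<dots> = exp 1 * (2 * exp (- 1/2))"
    by (simp add: exp_add[symmetric])
  finally have "ennreal (sqrt (2 * pi)) \<le> ennreal (exp 1) * ennreal (2 * exp (- 1/2))"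
    by (simp add: ennreal_mult'[symmetric] ennreal_leI)
  also have "\<dots> \<le> ennreal (exp 1) * (\<integral>\<^sup>+t. ennreal (exp (- (t^2 / 2))) * indicator {-2..2} t \<partial>lborel)"
    using core by (rule mult_left_mono) simp
  finally show "(\<integral>\<^sup>+t. ennreal (exp (- (t^2 / 2))) \<partial>lborel)
      \<le> ennreal (exp 1) * (\<integral>\<^sup>+t. ennreal (exp (- (t^2 / 2))) * indicator {-2..2} t \<partial>lborel)"
    unfolding total .
qed

lemma pi_sqrt_le_of_h_le:
  assumes "0 < \<kappa>" "0 < h" "h \<le> 1 / (10000 * pi^2 * \<kappa>)"
  shows "pi * sqrt (\<kappa> * h) \<le> 1/100"
proof (rule power2_le_imp_le)
  have "\<kappa> * h \<le> \<kappa> * (1 / (10000 * pi^2 * \<kappa>))"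
    using assms by (intro mult_left_mono) auto
  then show "(pi * sqrt (\<kappa> * h))^2 \<le> (1/100)^2"
    using assms(1,2) by (simp add: power_mult_distrib field_simps)
qed simp

lemma K_h_bounds:
  assumes "0 < \<kappa>" "0 < h" "pi * sqrt (\<kappa> * h) \<le> 1/100"
  shows "K_h \<kappa> h * (pi * sqrt (\<kappa> * h)) \<le> 5" "9/2 \<le> K_h \<kappa> h * (pi * sqrt (\<kappa> * h))"
proof -
  define u where "u = pi * sqrt (\<kappa> * h)"
  have "0 < u"
    using assms(1,2) by (simp add: u_def)
  have K: "K_h \<kappa> h = \<lfloor>5 / u\<rfloor>"
    by (simp add: K_h_def u_def mult.commute)
  have "K_h \<kappa> h \<le> 5 / u" "5 / u - 1 < K_h \<kappa> h"
    unfolding K by linarith+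
  then have "K_h \<kappa> h * u \<le> 5 / u * u" "(5 / u - 1) * u < K_h \<kappa> h * u"
    using \<open>0 < u\<close> by (simp_all only: mult_right_mono mult_strict_right_mono less_imp_le)
  then show "K_h \<kappa> h * (pi * sqrt (\<kappa> * h)) \<le> 5" "9/2 \<le> K_h \<kappa> h * (pi * sqrt (\<kappa> * h))"
    using \<open>0 < u\<close> assms(3) unfolding u_def[symmetric] by (simp_all add: left_diff_distrib)
qed

section \<open>Gradient bounds\<close>

lemma has_real_derivative_f_cos:
  assumes "0 < h"
  shows "(f_cos \<kappa> h has_real_derivative (2*\<kappa>/3 * t + \<kappa> * sqrt h / 3 * sin (t / sqrt h))) (at t)"
  unfolding f_cos_def[abs_def] using assms
  by (auto intro!: derivative_eq_intros simp: power2_eq_square field_simps)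

lemma near_minima_abs_le:
  assumes "0 < h" "t \<in> near_minima K h"
  shows "\<bar>t\<bar> \<le> (9/20 + 2 * K) * (pi * sqrt h)"
proof -
  obtain k :: int where "\<bar>k\<bar> \<le> K" and "\<bar>t - 2 * pi * k * sqrt h\<bar> \<le> 9/20 * pi * sqrt h"
    using assms(2) unfolding near_minima_def abs_le_iff by auto
  moreover have "\<bar>2 * pi * k * sqrt h\<bar> = 2 * (\<bar>real_of_int k\<bar> * (pi * sqrt h))"
    using assms(1) by (simp add: abs_mult)
  moreover have "\<bar>real_of_int k\<bar> * (pi * sqrt h) \<le> K * (pi * sqrt h)"
    using \<open>\<bar>k\<bar> \<le> K\<close> assms(1) by (intro mult_right_mono) (simp_all flip: of_int_abs)
  moreover have "(9/20 + 2 * real_of_int K) * (pi * sqrt h) = 9/20 * pi * sqrt h + 2 * (K * (pi * sqrt h))"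
    by (simp add: algebra_simps)
  ultimately show ?thesis
    using abs_triangle_ineq2[of t "2 * pi * k * sqrt h"] by linarith
qed

lemma f_cos_deriv_bound:
  assumes "0 < \<kappa>" "0 < h" "pi * sqrt (\<kappa> * h) \<le> 1/100" "K * (pi * sqrt (\<kappa> * h)) \<le> 5"
    and "t \<in> near_minima K h"
  shows "\<bar>2*\<kappa>/3 * t + \<kappa> * sqrt h / 3 * sin (t / sqrt h)\<bar> \<le> 7 * sqrt \<kappa>"
proof -
  define q where "q = sqrt \<kappa>"
  have "0 \<le> q" "q * q = \<kappa>"
    using assms(1) by (simp_all add: q_def)
  have "q * \<bar>t\<bar> \<le> q * ((9/20 + 2 * real_of_int K) * (pi * sqrt h))"
    using near_minima_abs_le[OF assms(2,5)] \<open>0 \<le> q\<close> by (rule mult_left_mono)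
  also have "\<dots> = 9/20 * (pi * sqrt (\<kappa> * h)) + 2 * (K * (pi * sqrt (\<kappa> * h)))"
    using assms(1,2) by (simp add: q_def real_sqrt_mult algebra_simps)
  finally have "q * \<bar>t\<bar> \<le> 10 + 1/100"
    using assms(3,4) by linarith
  have "\<bar>2*\<kappa>/3 * t\<bar> = 2/3 * q * (q * \<bar>t\<bar>)"
    unfolding \<open>q * q = \<kappa>\<close>[symmetric] using \<open>0 \<le> q\<close> by (simp add: abs_mult)
  also have "\<dots> \<le> 2/3 * q * (10 + 1/100)"
    using \<open>0 \<le> q\<close> \<open>q * \<bar>t\<bar> \<le> 10 + 1/100\<close> by (intro mult_left_mono) auto
  finally have "\<bar>2*\<kappa>/3 * t\<bar> \<le> 1001/150 * q"
    by simp
  have "\<bar>\<kappa> * sqrt h / 3 * sin (t / sqrt h)\<bar> \<le> \<kappa> * sqrt h / 3"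
    using assms(1,2) by (simp add: abs_mult mult_left_le)
  also have "\<dots> = q * sqrt (\<kappa> * h) / 3"
    using assms(1,2) \<open>q * q = \<kappa>\<close> by (simp add: q_def real_sqrt_mult)
  also have "\<dots> \<le> q * (1/100) / 3"
    using sqrt_mult_le_of_pi_sqrt_mult_le(1)[OF _ _ assms(3)] assms(1,2) \<open>0 \<le> q\<close>
    by (intro divide_right_mono mult_left_mono) auto
  finally show ?thesis
    using \<open>\<bar>2*\<kappa>/3 * t\<bar> \<le> 1001/150 * q\<close> \<open>0 \<le> q\<close>
      abs_triangle_ineq[of "2*\<kappa>/3 * t" "\<kappa> * sqrt h / 3 * sin (t / sqrt h)"]
    unfolding q_def by linarith
qed

lemma GDERIV_separable:
  fixes g g' :: "'n::finite \<Rightarrow> real \<Rightarrow> real"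
  assumes "\<And>i t. (g i has_real_derivative g' i t) (at t)"
  shows "GDERIV (\<lambda>x. \<Sum>i\<in>UNIV. g i (x$i)) x :> (\<chi> i. g' i (x$i))"
proof -
  have "((\<lambda>x. g i (x$i)) has_derivative (\<lambda>v. g' i (x$i) * v$i)) (at x)" for i
    using has_derivative_compose[OF bounded_linear_imp_has_derivative[OF bounded_linear_vec_nth[of i]]
        has_field_derivative_imp_has_derivative[OF assms[of i]]]
    by simp
  then show ?thesis
    unfolding gderiv_def
    by (rule has_derivative_eq_rhs[OF has_derivative_sum]) (simp add: inner_vec_def fun_eq_iff mult.commute)
qed

lemma norm_vec_le_sqrt_card:
  fixes y :: "real^'n::finite"
  assumes "\<And>i. \<bar>y$i\<bar> \<le> B"
  shows "norm y \<le> sqrt CARD('n) * B"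
proof -
  have "norm y = sqrt (\<Sum>i\<in>UNIV. \<bar>y$i\<bar>^2)"
    by (simp add: norm_vec_def L2_set_def)
  also have "\<dots> \<le> sqrt (\<Sum>i\<in>(UNIV::'n set). B^2)"
    using assms by (intro real_sqrt_le_mono sum_mono power_mono) auto
  also have "\<dots> = sqrt CARD('n) * B"
    using order_trans[OF abs_ge_zero assms] by (simp add: real_sqrt_mult)
  finally show ?thesis .
qed

section \<open>The coordinates of f_hard and Omega_hard\<close>

definition f_coord :: "real \<Rightarrow> real \<Rightarrow> 'n \<Rightarrow> 'n \<Rightarrow> real \<Rightarrow> real" where
  "f_coord \<kappa> h i1 i c = (if i = i1 then c^2 / 2 else f_cos \<kappa> h c)"

definition f_coord_deriv :: "real \<Rightarrow> real \<Rightarrow> 'n \<Rightarrow> 'n \<Rightarrow> real \<Rightarrow> real" where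
  "f_coord_deriv \<kappa> h i1 i c = (if i = i1 then c else 2*\<kappa>/3 * c + \<kappa> * sqrt h / 3 * sin (c / sqrt h))"

definition Omega_coord :: "real \<Rightarrow> real \<Rightarrow> 'n \<Rightarrow> 'n \<Rightarrow> real set" where
  "Omega_coord \<kappa> h i1 i = (if i = i1 then {-2..2} else near_minima (K_h \<kappa> h) h)"

lemma f_hard_eq_sum: "f_hard \<kappa> h i1 = (\<lambda>x. \<Sum>i\<in>UNIV. f_coord \<kappa> h i1 i (x$i))"
  unfolding f_hard_def f_coord_def f_cos_def by simp

lemma Omega_hard_eq_box: "Omega_hard \<kappa> h i1 = {x. \<forall>i. x$i \<in> Omega_coord \<kappa> h i1 i}"
  unfolding Omega_hard_def Omega_coord_def near_minima_def by (auto simp: abs_le_iff)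

lemma borel_measurable_f_coord [measurable]: "f_coord \<kappa> h i1 i \<in> borel_measurable borel"
  unfolding f_coord_def by measurable

lemma sets_Omega_coord [measurable]: "Omega_coord \<kappa> h i1 i \<in> sets borel"
  unfolding Omega_coord_def near_minima_eq_UN by (auto intro!: borel_closed closed_UN)

lemma has_real_derivative_f_coord:
  assumes "0 < h"
  shows "(f_coord \<kappa> h i1 i has_real_derivative f_coord_deriv \<kappa> h i1 i c) (at c)"
  using has_real_derivative_f_cos[OF assms] unfolding f_coord_def[abs_def] f_coord_deriv_def
  by (cases "i = i1") (auto intro!: derivative_eq_intros)

lemma f_coord_mass_concentration:
  assumes "0 < \<kappa>" "0 < h" "h \<le> 1 / (10000 * pi^2 * \<kappa>)"
  shows "(\<integral>\<^sup>+t. ennreal (exp (- f_coord \<kappa> h i1 i t)) \<partial>lborel) < \<infinity>"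
    and "0 < (\<integral>\<^sup>+t. ennreal (exp (- f_coord \<kappa> h i1 i t)) * indicator (Omega_coord \<kappa> h i1 i) t \<partial>lborel)"
    and "(\<integral>\<^sup>+t. ennreal (exp (- f_coord \<kappa> h i1 i t)) \<partial>lborel)
      \<le> ennreal (exp 1) * (\<integral>\<^sup>+t. ennreal (exp (- f_coord \<kappa> h i1 i t)) * indicator (Omega_coord \<kappa> h i1 i) t \<partial>lborel)"
proof -
  note small = pi_sqrt_le_of_h_le[OF assms]
  note K = K_h_bounds[OF assms(1,2) small]
  have "(\<integral>\<^sup>+t. ennreal (exp (- f_coord \<kappa> h i1 i t)) \<partial>lborel) < \<infinity>
    \<and> 0 < (\<integral>\<^sup>+t. ennreal (exp (- f_coord \<kappa> h i1 i t)) * indicator (Omega_coord \<kappa> h i1 i) t \<partial>lborel)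
    \<and> (\<integral>\<^sup>+t. ennreal (exp (- f_coord \<kappa> h i1 i t)) \<partial>lborel)
      \<le> ennreal (exp 1) * (\<integral>\<^sup>+t. ennreal (exp (- f_coord \<kappa> h i1 i t)) * indicator (Omega_coord \<kappa> h i1 i) t \<partial>lborel)"
    using gaussian_mass_concentration nn_integral_f_cos_finite[OF assms(1) less_imp_le[OF assms(2)]]
      f_cos_mass_concentration[OF assms(1,2) small K(2,1)]
    by (cases "i = i1") (simp_all add: f_coord_def Omega_coord_def)
  then show "(\<integral>\<^sup>+t. ennreal (exp (- f_coord \<kappa> h i1 i t)) \<partial>lborel) < \<infinity>"
    and "0 < (\<integral>\<^sup>+t. ennreal (exp (- f_coord \<kappa> h i1 i t)) * indicator (Omega_coord \<kappa> h i1 i) t \<partial>lborel)"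
    and "(\<integral>\<^sup>+t. ennreal (exp (- f_coord \<kappa> h i1 i t)) \<partial>lborel)
      \<le> ennreal (exp 1) * (\<integral>\<^sup>+t. ennreal (exp (- f_coord \<kappa> h i1 i t)) * indicator (Omega_coord \<kappa> h i1 i) t \<partial>lborel)"
    by auto
qed

lemma f_coord_deriv_bound:
  assumes "1 \<le> \<kappa>" "0 < h" "h \<le> 1 / (10000 * pi^2 * \<kappa>)" "c \<in> Omega_coord \<kappa> h i1 i"
  shows "\<bar>f_coord_deriv \<kappa> h i1 i c\<bar> \<le> 7 * sqrt \<kappa>"
proof (cases "i = i1")
  case True
  have "\<bar>c\<bar> \<le> 2"
    using assms(4) True by (simp add: Omega_coord_def abs_le_iff)
  also have "\<dots> \<le> 7 * sqrt \<kappa>"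
    using real_sqrt_le_mono[OF assms(1)] unfolding real_sqrt_one by linarith
  finally show ?thesis
    using True by (simp add: f_coord_deriv_def)
next
  case False
  have "0 < \<kappa>"
    using assms(1) by simp
  note small = pi_sqrt_le_of_h_le[OF \<open>0 < \<kappa>\<close> assms(2,3)]
  show ?thesis
    using False assms(4) f_cos_deriv_bound[OF \<open>0 < \<kappa>\<close> assms(2) small K_h_bounds(1)[OF \<open>0 < \<kappa>\<close> assms(2) small]]
    by (simp add: f_coord_deriv_def Omega_coord_def)
qed

theorem lemma9:
  fixes \<kappa> h :: real and i1 :: "'n::finite"
  assumes "\<kappa> \<ge> 3" and "0 < h" and "h \<le> 1 / (10000 * pi^2 * \<kappa>)"
  shows "measure (pi_star \<kappa> h i1) (Omega_hard \<kappa> h i1) \<ge> exp (- real CARD('n))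
    \<and> (\<forall>x\<in>Omega_hard \<kappa> h i1. \<exists>D. GDERIV (f_hard \<kappa> h i1) x :> D
          \<and> norm D \<le> 10 * sqrt (\<kappa> * real CARD('n)))"
proof
  have "0 < \<kappa>" "1 \<le> \<kappa>"
    using assms(1) by simp_all
  have "exp (- real CARD('n)) = (1 / exp 1) ^ CARD('n)"
    by (simp add: exp_minus power_one_over exp_of_nat_mult[symmetric] inverse_eq_divide)
  also have "\<dots> \<le> measure (pi_star \<kappa> h i1) (Omega_hard \<kappa> h i1)"
    unfolding pi_star_def Omega_hard_eq_box
    using f_coord_mass_concentration[OF \<open>0 < \<kappa>\<close> assms(2,3)]
    by (intro measure_separable_density_box_ge[OF f_hard_eq_sum]) auto
  finally show "measure (pi_star \<kappa> h i1) (Omega_hard \<kappa> h i1) \<ge> exp (- real CARD('n))" .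
  show "\<forall>x\<in>Omega_hard \<kappa> h i1. \<exists>D. GDERIV (f_hard \<kappa> h i1) x :> D \<and> norm D \<le> 10 * sqrt (\<kappa> * real CARD('n))"
  proof (intro ballI exI conjI)
    fix x
    assume "x \<in> Omega_hard \<kappa> h i1"
    show "GDERIV (f_hard \<kappa> h i1) x :> (\<chi> i. f_coord_deriv \<kappa> h i1 i (x$i))"
      unfolding f_hard_eq_sum by (intro GDERIV_separable has_real_derivative_f_coord assms(2))
    have "\<bar>f_coord_deriv \<kappa> h i1 i (x$i)\<bar> \<le> 7 * sqrt \<kappa>" for i
      using \<open>x \<in> Omega_hard \<kappa> h i1\<close> unfolding Omega_hard_eq_box
      by (intro f_coord_deriv_bound[OF \<open>1 \<le> \<kappa>\<close> assms(2,3)]) simp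
    then have "norm (\<chi> i. f_coord_deriv \<kappa> h i1 i (x$i)) \<le> sqrt CARD('n) * (7 * sqrt \<kappa>)"
      by (intro norm_vec_le_sqrt_card) simp
    also have "\<dots> \<le> 10 * sqrt (\<kappa> * real CARD('n))"
      using \<open>0 < \<kappa>\<close> by (simp add: real_sqrt_mult)
    finally show "norm (\<chi> i. f_coord_deriv \<kappa> h i1 i (x$i)) \<le> 10 * sqrt (\<kappa> * real CARD('n))" .
  qed
qed

end
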